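(* Let $A\in\mathbb C^{m\times n}$, $m<n$, have full rank, let $0<p_0\le1$, and assume there exists $X\in\mathcal G(A)$ each of whose columns has at most $k_{p_0}(A)$ nonzero entries. Then for all $0<q<\infty$ and all $0\le p\le p_0$, $\mathrm{ginv}_{\mathrm{col}(p,q)}(A)=\{X\}$.
   Context: $\mathcal G(A)=\{X\in\mathbb C^{n\times m}:AX=I_m\}$, $\mathrm{ginv}_\nu(A)=\arg\min_{X\in\mathcal G(A)}\|X\|_\nu$. $\|x\|_0$ is the number of nonzero entries of $x$, and for $0<p<1$, $\|x\|_p=(\sum_i|x_i|^p)^{1/p}$. For $M$ with columns $m_j$, $\|M\|_{\mathrm{col}(p,q)}=(\sum_j\|m_j\|_p^q)^{1/q}$. For $0\le p\le1$, $k_p(A)$ is the largest integer $k$ such that for every $x\in\mathbb C^n$ with $\|x\|_0\le k$, $x$ is the unique minimizer of $\|\hat x\|_p$ subject to $A\hat x=Ax$. *)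

theory Defs
  imports "HOL-Analysis.Analysis" "Jordan_Normal_Form.DL_Rank"
begin

definition Ginv_set :: "complex mat \<Rightarrow> complex mat set" where
  "Ginv_set A = {X \<in> carrier_mat (dim_col A) (dim_row A). A * X = 1\<^sub>m (dim_row A)}"

definition ginv :: "(complex mat \<Rightarrow> real) \<Rightarrow> complex mat \<Rightarrow> complex mat set" where
  "ginv \<nu> A = {X \<in> Ginv_set A. \<forall>Y \<in> Ginv_set A. \<nu> X \<le> \<nu> Y}"

definition nnz :: "complex vec \<Rightarrow> nat" where
  "nnz x = card {i. i < dim_vec x \<and> x $ i \<noteq> 0}"

definition pnorm :: "real \<Rightarrow> complex vec \<Rightarrow> real" where
  "pnorm p x = (if p = 0 then real (nnz x)
               else (\<Sum>i<dim_vec x. cmod (x $ i) powr p) powr (1 / p))"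

definition colnorm :: "real \<Rightarrow> real \<Rightarrow> complex mat \<Rightarrow> real" where
  "colnorm p q M = (\<Sum>j<dim_col M. pnorm p (col M j) powr q) powr (1 / q)"

definition recovers :: "real \<Rightarrow> complex mat \<Rightarrow> nat \<Rightarrow> bool" where
  "recovers p A k = (\<forall>x \<in> carrier_vec (dim_col A). nnz x \<le> k \<longrightarrow>
      (\<forall>y \<in> carrier_vec (dim_col A). A *\<^sub>v y = A *\<^sub>v x \<longrightarrow> y \<noteq> x \<longrightarrow> pnorm p x < pnorm p y))"

definition kp :: "real \<Rightarrow> complex mat \<Rightarrow> nat" where
  "kp p A = (GREATEST k. recovers p A k)"

end

theory Submission
  imports Defs
begin

text \<open>
  Recovery of all k-sparse vectors by p-minimisation is equivalent to the null space property:
  on every nonzero kernel vector z, any k entries carry less p-mass (the sum of the \<open>|z i| powr p\<close>)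
  than the remaining ones; the converse direction uses the p-triangle inequality, hence \<open>p \<le> 1\<close>.
  The null space property passes from p0 to every smaller exponent r: it suffices to check it on
  the set T of the k largest entries, and in \<open>|z i| powr r = |z i| powr (r - p0) * |z i| powr p0\<close>
  the first factor is at most \<open>t powr (r - p0)\<close> on T and at least that off T, where t is the
  smallest entry on T. So every column of X is the unique p-minimal solution of \<open>A x = e j\<close>, and
  since the mixed norm is strictly increasing in the column norms, X is the unique minimiser.
\<close>

lemma powr_add_le_add_powr:
  fixes a b r :: real
  assumes "0 \<le> a" "0 \<le> b" "0 \<le> r" "r \<le> 1"
  shows "(a + b) powr r \<le> a powr r + b powr r"
proof (cases "a = 0 \<or> b = 0 \<or> r = 0")
  case True
  then show ?thesis using assms by auto
next
  case False
  then have a: "0 < a" and b: "0 < b" using assms by auto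
  have "(a + b) powr r = (a + b) * (a + b) powr (r - 1)"
    using a b by (simp add: powr_diff)
  also have "\<dots> = a * (a + b) powr (r - 1) + b * (a + b) powr (r - 1)"
    by (simp add: algebra_simps)
  also have "\<dots> \<le> a * a powr (r - 1) + b * b powr (r - 1)"
    using a b assms by (intro add_mono mult_left_mono powr_mono2') auto
  also have "\<dots> = a powr r + b powr r"
    using a b by (simp add: powr_diff)
  finally show ?thesis .
qed

lemma exists_top_subset:
  fixes b :: "'a \<Rightarrow> 'b::linorder"
  assumes "finite I" "c \<le> card I"
  shows "\<exists>T\<subseteq>I. card T = c \<and> (\<forall>i\<in>T. \<forall>j\<in>I - T. b j \<le> b i)"
  using assms(2)
proof (induction c)
  case 0
  then show ?case by (intro exI[of _ "{}"]) auto
next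
  case (Suc c)
  then obtain T where T: "T \<subseteq> I" "card T = c" "\<forall>i\<in>T. \<forall>j\<in>I - T. b j \<le> b i"
    by auto
  have "I - T \<noteq> {}"
  proof
    assume "I - T = {}"
    then have "card I \<le> c"
      using T card_mono[OF finite_subset[OF T(1) assms(1)]] by auto
    with Suc.prems show False by simp
  qed
  moreover have "finite (I - T)"
    using assms(1) by simp
  ultimately have "Max (b ` (I - T)) \<in> b ` (I - T)"
    by (intro Max_in) auto
  then obtain j where j: "j \<in> I - T" "b j = Max (b ` (I - T))"
    by auto
  have "\<forall>l\<in>I - T. b l \<le> b j"
    using j \<open>finite (I - T)\<close> by simp
  moreover have "card (insert j T) = Suc c"
    using T j assms(1) by (simp add: finite_subset)
  ultimately show ?case
    using T j by (intro exI[of _ "insert j T"]) auto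
qed

lemma sum_le_sum_top_subset:
  fixes b :: "'a \<Rightarrow> real"
  assumes fin: "finite I" and "S \<subseteq> I" "T \<subseteq> I" and card: "card S = card T"
    and top: "\<forall>i\<in>T. \<forall>j\<in>I - T. b j \<le> b i"
  shows "sum b S \<le> sum b T"
proof -
  have finST: "finite S" "finite T"
    using assms by (auto intro: finite_subset)
  have card_diff: "card (S - T) = card (T - S)"
    using finST card by (simp add: card_Diff_subset_Int Int_commute)
  obtain M where below: "\<forall>j\<in>S - T. b j \<le> M" and above: "\<forall>i\<in>T - S. M \<le> b i"
  proof (cases "S - T = {}")
    case True
    then have "T - S = {}"
      using card_subset_eq[of T S] finST card by auto
    then show thesis using True that by blast
  next
    case False
    then show thesis
      using that[of "Max (b ` (S - T))"] top finST \<open>S \<subseteq> I\<close>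
      by auto
  qed
  have "sum b S = sum b (S \<inter> T) + sum b (S - T)"
    using finST by (simp add: sum.Int_Diff)
  also have "sum b (S - T) \<le> of_nat (card (T - S)) * M"
    using sum_bounded_above[of "S - T" b M] below card_diff by simp
  also have "\<dots> \<le> sum b (T - S)"
    using sum_bounded_below[of "T - S" M b] above by simp
  also have "sum b (S \<inter> T) + sum b (T - S) = sum b T"
    using finST by (metis Int_commute sum.Int_Diff)
  finally show ?thesis by simp
qed

lemma sum_powr_less_threshold:
  fixes a :: "'a \<Rightarrow> real"
  assumes t: "0 < t" and r: "0 \<le> r" "r \<le> p"
    and large: "\<forall>i\<in>S. t \<le> a i" and small: "\<forall>j\<in>R. 0 \<le> a j \<and> a j \<le> t"
    and less: "(\<Sum>i\<in>S. a i powr p) < (\<Sum>j\<in>R. a j powr p)"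
  shows "(\<Sum>i\<in>S. a i powr r) < (\<Sum>j\<in>R. a j powr r)"
proof -
  define c where "c = t powr (r - p)"
  have split: "x powr r = x powr (r - p) * x powr p" if "0 < x" for x
    using that by (simp add: powr_add[symmetric])
  have "a i powr r \<le> c * a i powr p" if "i \<in> S" for i
  proof -
    have "0 < a i" "t \<le> a i" using large t that by force+
    then show ?thesis
      unfolding c_def split[OF \<open>0 < a i\<close>] using t r by (intro mult_right_mono powr_mono2') auto
  qed
  then have "(\<Sum>i\<in>S. a i powr r) \<le> c * (\<Sum>i\<in>S. a i powr p)"
    by (simp add: sum_distrib_left sum_mono)
  also have "\<dots> < c * (\<Sum>j\<in>R. a j powr p)"
    using less t by (simp add: c_def)
  also have "\<dots> \<le> (\<Sum>j\<in>R. a j powr r)"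
  proof -
    have "c * a j powr p \<le> a j powr r" if "j \<in> R" for j
    proof (cases "a j = 0")
      case False
      then have "0 < a j" "a j \<le> t" using small that by force+
      then show ?thesis
        unfolding c_def split[OF \<open>0 < a j\<close>] using r by (intro mult_right_mono powr_mono2') auto
    qed simp
    then show ?thesis by (simp add: sum_distrib_left sum_mono)
  qed
  finally show ?thesis .
qed

lemma null_space_property_powr_mono:
  fixes a :: "'a \<Rightarrow> real"
  assumes fin: "finite I" and nonneg: "\<forall>i\<in>I. 0 \<le> a i" and r: "0 \<le> r" "r \<le> p"
    and nsp: "\<And>S. S \<subseteq> I \<Longrightarrow> card S \<le> k \<Longrightarrow> (\<Sum>i\<in>S. a i powr p) < (\<Sum>i\<in>I - S. a i powr p)"
    and S: "S \<subseteq> I" "card S \<le> k"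
  shows "(\<Sum>i\<in>S. a i powr r) < (\<Sum>i\<in>I - S. a i powr r)"
proof -
  obtain T where T: "T \<subseteq> I" "card T = card S" and top: "\<forall>i\<in>T. \<forall>j\<in>I - T. a j \<le> a i"
    using exists_top_subset[OF fin card_mono[OF fin S(1)], of a] by blast
  have less_p: "(\<Sum>i\<in>T. a i powr p) < (\<Sum>i\<in>I - T. a i powr p)"
    using nsp T S by simp
  have less_r: "(\<Sum>i\<in>T. a i powr r) < (\<Sum>i\<in>I - T. a i powr r)"
  proof (cases "T = {}")
    case True
    then have "(\<Sum>i\<in>I - T. a i powr p) \<noteq> 0"
      using less_p by simp
    then obtain j where j: "j \<in> I" "a j powr p \<noteq> 0"
      by (meson DiffD1 sum.neutral)
    then have "0 < a j powr r"
      using nonneg by (simp add: order_le_neq_trans)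
    also have "\<dots> \<le> (\<Sum>i\<in>I - T. a i powr r)"
      using j fin True by (intro member_le_sum) auto
    finally show ?thesis using True by simp
  next
    case False
    define t where "t = Min (a ` T)"
    have "finite T" using fin T finite_subset by blast
    then have large: "\<forall>i\<in>T. t \<le> a i" and "t \<in> a ` T"
      using False by (auto simp: t_def)
    have small: "\<forall>j\<in>I - T. 0 \<le> a j \<and> a j \<le> t"
      using top nonneg \<open>t \<in> a ` T\<close> by auto
    have "t \<noteq> 0"
    proof
      assume "t = 0"
      then have "(\<Sum>i\<in>I - T. a i powr p) = 0"
        using small by (intro sum.neutral) force
      moreover have "0 \<le> (\<Sum>i\<in>T. a i powr p)"
        by (simp add: sum_nonneg)
      ultimately show False using less_p by simp
    qed
    then have "0 < t" using \<open>t \<in> a ` T\<close> T nonneg by force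
    then show ?thesis
      using sum_powr_less_threshold[OF _ r large small less_p] by blast
  qed
  have "(\<Sum>i\<in>S. a i powr r) \<le> (\<Sum>i\<in>T. a i powr r)"
    using top nonneg T S fin by (intro sum_le_sum_top_subset[where I = I]) (auto intro: powr_mono2 r)
  then show ?thesis
    using less_r fin T(1) S(1) by (simp add: sum_diff)
qed

text \<open>Since \<open>0 powr 0 = 0\<close>, \<open>vec_powr_sum 0\<close> counts the nonzero entries, so for every
  \<open>p \<ge> 0\<close> the quasinorm \<open>pnorm p\<close> is a strictly increasing function of \<open>vec_powr_sum p\<close>.\<close>

definition vec_powr_sum :: "real \<Rightarrow> complex vec \<Rightarrow> real" where
  "vec_powr_sum p x = (\<Sum>i<dim_vec x. cmod (x $ i) powr p)"

lemma vec_powr_sum_nonneg: "0 \<le> vec_powr_sum p x"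
  unfolding vec_powr_sum_def by (intro sum_nonneg) auto

lemma nnz_eq_vec_powr_sum: "real (nnz x) = vec_powr_sum 0 x"
proof -
  have "{i. i < dim_vec x \<and> x $ i \<noteq> 0} = {i\<in>{..<dim_vec x}. x $ i \<noteq> 0}"
    by auto
  then have "real (nnz x) = (\<Sum>i\<in>{i\<in>{..<dim_vec x}. x $ i \<noteq> 0}. 1)"
    unfolding nnz_def by simp
  also have "\<dots> = (\<Sum>i<dim_vec x. if x $ i \<noteq> 0 then 1 else 0)"
    by (rule sum.inter_filter) simp
  also have "\<dots> = vec_powr_sum 0 x"
    unfolding vec_powr_sum_def by (intro sum.cong) auto
  finally show ?thesis .
qed

lemma pnorm_nonneg: "0 \<le> pnorm p x"
  unfolding pnorm_def by auto

lemma pnorm_less_iff_vec_powr_sum_less: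
  assumes "0 \<le> p"
  shows "pnorm p x < pnorm p y \<longleftrightarrow> vec_powr_sum p x < vec_powr_sum p y"
proof (cases "p = 0")
  case True
  then show ?thesis unfolding pnorm_def by (simp add: nnz_eq_vec_powr_sum)
next
  case False
  then have "0 < 1 / p" using assms by simp
  have "u powr (1 / p) < v powr (1 / p) \<longleftrightarrow> u < v" if "0 \<le> u" "0 \<le> v" for u v :: real
  proof
    assume less: "u powr (1 / p) < v powr (1 / p)"
    show "u < v"
    proof (rule ccontr)
      assume "\<not> u < v"
      then have "v powr (1 / p) \<le> u powr (1 / p)"
        using that \<open>0 < 1 / p\<close> by (intro powr_mono2) auto
      with less show False by simp
    qed
  qed (use that \<open>0 < 1 / p\<close> in \<open>intro powr_less_mono2; simp\<close>)
  moreover have "pnorm p v = vec_powr_sum p v powr (1 / p)" for v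
    unfolding pnorm_def vec_powr_sum_def using False by simp
  ultimately show ?thesis
    using vec_powr_sum_nonneg by simp
qed

lemma vec_powr_sum_eq_sum_support:
  fixes x :: "complex vec"
  assumes "x \<in> carrier_vec n" "S \<subseteq> {..<n}" "\<forall>i<n. i \<notin> S \<longrightarrow> x $ i = 0"
  shows "vec_powr_sum p x = (\<Sum>i\<in>S. cmod (x $ i) powr p)"
  unfolding vec_powr_sum_def using assms by (intro sum.mono_neutral_right) auto

lemma recoversD:
  assumes "recovers p A k" "x \<in> carrier_vec (dim_col A)" "nnz x \<le> k"
    and "y \<in> carrier_vec (dim_col A)" "A *\<^sub>v y = A *\<^sub>v x" "y \<noteq> x"
  shows "pnorm p x < pnorm p y"
  using assms(1)[unfolded recovers_def, rule_format, OF assms(2-6)] .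

lemma recovers_zero:
  assumes "0 \<le> p"
  shows "recovers p A 0"
  unfolding recovers_def
proof (intro ballI impI)
  fix x y :: "complex vec"
  assume x: "x \<in> carrier_vec (dim_col A)" "nnz x \<le> 0" and y: "y \<in> carrier_vec (dim_col A)"
    and "y \<noteq> x"
  have "x = 0\<^sub>v (dim_col A)"
    using x by (intro eq_vecI) (auto simp: nnz_def)
  then have "vec_powr_sum p x = 0"
    unfolding vec_powr_sum_def by simp
  obtain i where i: "i < dim_col A" "y $ i \<noteq> 0"
    using \<open>y \<noteq> x\<close> \<open>x = 0\<^sub>v (dim_col A)\<close> y by (metis carrier_vecD eq_vecI index_zero_vec(1,2))
  have "0 < cmod (y $ i) powr p"
    using i by simp
  also have "\<dots> \<le> vec_powr_sum p y"
    unfolding vec_powr_sum_def using i y by (intro member_le_sum) auto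
  finally show "pnorm p x < pnorm p y"
    using pnorm_less_iff_vec_powr_sum_less[OF assms] \<open>vec_powr_sum p x = 0\<close> by simp
qed

lemma exists_nonzero_kernel_vec:
  fixes A :: "complex mat"
  assumes A: "A \<in> carrier_mat m n" and rank: "vec_space.rank m A < n"
  obtains z where "z \<in> carrier_vec n" "z \<noteq> 0\<^sub>v n" "A *\<^sub>v z = 0\<^sub>v m"
proof (cases "distinct (cols A)")
  case True
  have "\<not> module.lin_indpt class_ring (module_vec TYPE(complex) m) (set (cols A))"
  proof
    assume "module.lin_indpt class_ring (module_vec TYPE(complex) m) (set (cols A))"
    then have "vec_space.rank m A = n"
      using vec_space.lin_indpt_full_rank[OF A True] by auto
    with rank show False by simp
  qed
  then obtain v where "v \<in> carrier_vec n" "v \<noteq> 0\<^sub>v n" "A *\<^sub>v v = 0\<^sub>v m"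
    using vec_space.lin_depE[OF A _ True] by blast
  then show thesis
    by (rule that)
next
  case False
  then obtain i j where ij: "i < length (cols A)" "j < length (cols A)" "i \<noteq> j" "cols A ! i = cols A ! j"
    using distinct_conv_nth by blast
  then have ij_n: "i < n" "j < n" and same_col: "col A i = col A j"
    using A by auto
  have unit: "A *\<^sub>v unit_vec n l = col A l" if "l < n" for l
    using A that by (intro eq_vecI) auto
  define z :: "complex vec" where "z = unit_vec n i - unit_vec n j"
  have "z $ i = 1"
    unfolding z_def using ij_n ij(3) by simp
  then have "z \<noteq> 0\<^sub>v n"
    using ij_n by auto
  moreover have "A *\<^sub>v z = col A i - col A j"
    unfolding z_def using A ij_n by (simp add: mult_minus_distrib_mat_vec unit)
  moreover have "col A j \<in> carrier_vec m"
    using A ij_n by simp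
  ultimately show thesis
    using that[of z] same_col by (simp add: z_def)
qed

lemma recovers_less_dim_col:
  fixes A :: "complex mat"
  assumes A: "A \<in> carrier_mat m n" and rank: "vec_space.rank m A < n"
    and rec: "recovers p A k" and p: "0 \<le> p"
  shows "k < n"
proof (rule ccontr)
  assume "\<not> k < n"
  obtain z where z: "z \<in> carrier_vec n" "z \<noteq> 0\<^sub>v n" "A *\<^sub>v z = 0\<^sub>v m"
    using exists_nonzero_kernel_vec[OF A rank] by blast
  have "nnz z \<le> card {..<n}"
    unfolding nnz_def using z by (intro card_mono) auto
  then have sparse: "nnz z \<le> k"
    using \<open>\<not> k < n\<close> by simp
  have same_image: "A *\<^sub>v 0\<^sub>v n = A *\<^sub>v z"
    using z A by auto
  have "z \<in> carrier_vec (dim_col A)" "0\<^sub>v n \<in> carrier_vec (dim_col A)"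
    using z A by auto
  moreover have "0\<^sub>v n \<noteq> z"
    using z(2) by simp
  ultimately have "pnorm p z < pnorm p (0\<^sub>v n)"
    by (rule recoversD[OF rec _ sparse _ same_image])
  moreover have "vec_powr_sum p (0\<^sub>v n) = 0"
    unfolding vec_powr_sum_def by simp
  ultimately show False
    using pnorm_less_iff_vec_powr_sum_less[OF p] vec_powr_sum_nonneg[of p z] by simp
qed

lemma recovers_kp:
  fixes A :: "complex mat"
  assumes "A \<in> carrier_mat m n" "vec_space.rank m A < n" "0 \<le> p"
  shows "recovers p A (kp p A)"
  unfolding kp_def
proof (rule GreatestI_nat[where k = 0 and b = n])
  show "recovers p A 0"
    using assms(3) by (rule recovers_zero)
  show "k \<le> n" if "recovers p A k" for k
    using recovers_less_dim_col[OF assms(1,2) that assms(3)] by simp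
qed

lemma recovers_null_space_property:
  fixes A :: "complex mat" and z :: "complex vec"
  assumes A: "A \<in> carrier_mat m n" and rec: "recovers p A k" and p: "0 \<le> p"
    and z: "z \<in> carrier_vec n" "A *\<^sub>v z = 0\<^sub>v m" "z \<noteq> 0\<^sub>v n"
    and S: "S \<subseteq> {..<n}" "card S \<le> k"
  shows "(\<Sum>i\<in>S. cmod (z $ i) powr p) < (\<Sum>i\<in>{..<n} - S. cmod (z $ i) powr p)"
proof -
  define x :: "complex vec" where "x = vec n (\<lambda>i. if i \<in> S then - z $ i else 0)"
  define y :: "complex vec" where "y = vec n (\<lambda>i. if i \<in> S then 0 else z $ i)"
  have x: "x \<in> carrier_vec n" and y: "y \<in> carrier_vec n"
    unfolding x_def y_def by auto
  have "y = x + z"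
    unfolding x_def y_def using z by (intro eq_vecI) auto
  then have Ay: "A *\<^sub>v y = A *\<^sub>v x"
    using A x z by (simp add: mult_add_distrib_mat_vec)
  have "y \<noteq> x"
  proof
    assume "y = x"
    have "z = 0\<^sub>v n"
    proof (rule eq_vecI)
      fix i assume "i < dim_vec (0\<^sub>v n)"
      then show "z $ i = 0\<^sub>v n $ i"
        using arg_cong[OF \<open>y = x\<close>, of "\<lambda>v. v $ i"] by (auto simp: x_def y_def split: if_splits)
    qed (use z in auto)
    with z show False by simp
  qed
  have "nnz x \<le> k"
  proof -
    have "{i. i < dim_vec x \<and> x $ i \<noteq> 0} \<subseteq> S"
      unfolding x_def by (auto split: if_splits)
    then show ?thesis
      unfolding nnz_def using S finite_subset by (meson card_mono finite_lessThan le_trans)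
  qed
  have "x \<in> carrier_vec (dim_col A)" "y \<in> carrier_vec (dim_col A)"
    using x y A by auto
  then have "pnorm p x < pnorm p y"
    using recoversD[OF rec _ \<open>nnz x \<le> k\<close> _ Ay \<open>y \<noteq> x\<close>] by blast
  moreover have "vec_powr_sum p x = (\<Sum>i\<in>S. cmod (z $ i) powr p)"
  proof -
    have "vec_powr_sum p x = (\<Sum>i\<in>S. cmod (x $ i) powr p)"
      using S by (intro vec_powr_sum_eq_sum_support[OF x]) (auto simp: x_def)
    also have "\<dots> = (\<Sum>i\<in>S. cmod (z $ i) powr p)"
      using S by (intro sum.cong) (auto simp: x_def)
    finally show ?thesis .
  qed
  moreover have "vec_powr_sum p y = (\<Sum>i\<in>{..<n} - S. cmod (z $ i) powr p)"
  proof -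
    have "vec_powr_sum p y = (\<Sum>i\<in>{..<n} - S. cmod (y $ i) powr p)"
      by (intro vec_powr_sum_eq_sum_support[OF y]) (auto simp: y_def)
    also have "\<dots> = (\<Sum>i\<in>{..<n} - S. cmod (z $ i) powr p)"
      by (intro sum.cong) (auto simp: y_def)
    finally show ?thesis .
  qed
  ultimately show ?thesis
    using pnorm_less_iff_vec_powr_sum_less[OF p] by simp
qed

lemma recoversI_null_space_property:
  fixes A :: "complex mat"
  assumes A: "A \<in> carrier_mat m n" and p: "0 \<le> p" "p \<le> 1"
    and nsp: "\<And>z S. z \<in> carrier_vec n \<Longrightarrow> A *\<^sub>v z = 0\<^sub>v m \<Longrightarrow> z \<noteq> 0\<^sub>v n \<Longrightarrow>
      S \<subseteq> {..<n} \<Longrightarrow> card S \<le> k \<Longrightarrow>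
      (\<Sum>i\<in>S. cmod (z $ i) powr p) < (\<Sum>i\<in>{..<n} - S. cmod (z $ i) powr p)"
  shows "recovers p A k"
  unfolding recovers_def
proof (intro ballI impI)
  fix x y :: "complex vec"
  assume x: "x \<in> carrier_vec (dim_col A)" "nnz x \<le> k" and y: "y \<in> carrier_vec (dim_col A)"
    and Ay: "A *\<^sub>v y = A *\<^sub>v x" and "y \<noteq> x"
  define z where "z = y - x"
  define S where "S = {i. i < n \<and> x $ i \<noteq> 0}"
  have x_n: "x \<in> carrier_vec n" and y_n: "y \<in> carrier_vec n"
    using x y A by auto
  then have "z \<in> carrier_vec n"
    unfolding z_def by simp
  moreover have "A *\<^sub>v z = 0\<^sub>v m"
    unfolding z_def using A x y Ay by (simp add: mult_minus_distrib_mat_vec)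
  moreover have "z \<noteq> 0\<^sub>v n"
  proof
    assume "z = 0\<^sub>v n"
    have "y = x"
    proof (rule eq_vecI)
      fix i assume "i < dim_vec x"
      then show "y $ i = x $ i"
        using arg_cong[OF \<open>z = 0\<^sub>v n\<close>, of "\<lambda>v. v $ i"] x y A unfolding z_def by auto
    qed (use x y in auto)
    with \<open>y \<noteq> x\<close> show False ..
  qed
  moreover have "S \<subseteq> {..<n}" "card S \<le> k"
    using x A unfolding S_def nnz_def by auto
  ultimately have less: "(\<Sum>i\<in>S. cmod (z $ i) powr p) < (\<Sum>i\<in>{..<n} - S. cmod (z $ i) powr p)"
    by (rule nsp)
  have y_split: "y $ i = x $ i + z $ i" if "i < n" for i
    unfolding z_def using that x_n y_n by simp
  have "vec_powr_sum p x = (\<Sum>i\<in>S. cmod (x $ i) powr p)"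
    using \<open>S \<subseteq> {..<n}\<close> by (intro vec_powr_sum_eq_sum_support[OF x_n]) (auto simp: S_def)
  also have "\<dots> \<le> (\<Sum>i\<in>S. cmod (y $ i) powr p + cmod (z $ i) powr p)"
  proof (rule sum_mono)
    fix i assume "i \<in> S"
    then have "x $ i = y $ i - z $ i"
      using \<open>S \<subseteq> {..<n}\<close> y_split by force
    then have "cmod (x $ i) \<le> cmod (y $ i) + cmod (z $ i)"
      using norm_triangle_ineq4[of "y $ i" "z $ i"] by simp
    then have "cmod (x $ i) powr p \<le> (cmod (y $ i) + cmod (z $ i)) powr p"
      using p by (intro powr_mono2) auto
    also have "\<dots> \<le> cmod (y $ i) powr p + cmod (z $ i) powr p"
      using p by (intro powr_add_le_add_powr) auto
    finally show "cmod (x $ i) powr p \<le> cmod (y $ i) powr p + cmod (z $ i) powr p" .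
  qed
  also have "\<dots> < (\<Sum>i\<in>S. cmod (y $ i) powr p) + (\<Sum>i\<in>{..<n} - S. cmod (z $ i) powr p)"
    using less by (simp add: sum.distrib)
  also have "(\<Sum>i\<in>{..<n} - S. cmod (z $ i) powr p) = (\<Sum>i\<in>{..<n} - S. cmod (y $ i) powr p)"
    using y_split by (intro sum.cong) (auto simp: S_def)
  also have "(\<Sum>i\<in>S. cmod (y $ i) powr p) + \<dots> = vec_powr_sum p y"
    unfolding vec_powr_sum_def using y_n \<open>S \<subseteq> {..<n}\<close>
    by (simp add: sum.subset_diff[of S "{..<n}"])
  finally show "pnorm p x < pnorm p y"
    using pnorm_less_iff_vec_powr_sum_less[OF p(1)] by simp
qed

lemma recovers_exponent_mono:
  fixes A :: "complex mat"
  assumes A: "A \<in> carrier_mat m n" and rec: "recovers p0 A k"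
    and p: "0 \<le> p" "p \<le> p0" "p \<le> 1"
  shows "recovers p A k"
proof (rule recoversI_null_space_property[OF A p(1,3)])
  fix z :: "complex vec" and S
  assume z: "z \<in> carrier_vec n" "A *\<^sub>v z = 0\<^sub>v m" "z \<noteq> 0\<^sub>v n" and S: "S \<subseteq> {..<n}" "card S \<le> k"
  have "0 \<le> p0" using p by simp
  show "(\<Sum>i\<in>S. cmod (z $ i) powr p) < (\<Sum>i\<in>{..<n} - S. cmod (z $ i) powr p)"
    using null_space_property_powr_mono[OF finite_lessThan _ p(1,2)
        recovers_null_space_property[OF A rec \<open>0 \<le> p0\<close> z] S]
    by simp
qed

lemma Ginv_set_col:
  assumes "A \<in> carrier_mat m n" "X \<in> Ginv_set A" "j < m"
  shows "A *\<^sub>v col X j = unit_vec m j"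
  using assms col_mult2[of A m n X m j] unfolding Ginv_set_def by auto

lemma colnorm_less:
  assumes "X \<in> carrier_mat n m" "Y \<in> carrier_mat n m" "0 < q"
    and le: "\<And>j. j < m \<Longrightarrow> pnorm p (col X j) \<le> pnorm p (col Y j)"
    and less: "j0 < m" "pnorm p (col X j0) < pnorm p (col Y j0)"
  shows "colnorm p q X < colnorm p q Y"
proof -
  have "(\<Sum>j<m. pnorm p (col X j) powr q) < (\<Sum>j<m. pnorm p (col Y j) powr q)"
  proof (rule sum_strict_mono_ex1)
    show "\<forall>j\<in>{..<m}. pnorm p (col X j) powr q \<le> pnorm p (col Y j) powr q"
      using le \<open>0 < q\<close> pnorm_nonneg by (auto intro: powr_mono2)
    show "\<exists>j\<in>{..<m}. pnorm p (col X j) powr q < pnorm p (col Y j) powr q"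
      using less \<open>0 < q\<close> pnorm_nonneg by (auto intro: powr_less_mono2)
  qed simp
  then have "(\<Sum>j<m. pnorm p (col X j) powr q) powr (1 / q) < (\<Sum>j<m. pnorm p (col Y j) powr q) powr (1 / q)"
    using \<open>0 < q\<close> by (intro powr_less_mono2) (auto intro!: sum_nonneg)
  then show ?thesis
    unfolding colnorm_def using assms by simp
qed

lemma ginv_eq_singletonI:
  assumes "X \<in> Ginv_set A" and "\<And>Y. Y \<in> Ginv_set A \<Longrightarrow> Y \<noteq> X \<Longrightarrow> \<nu> X < \<nu> Y"
  shows "ginv \<nu> A = {X}"
proof -
  have minimal: "\<nu> X \<le> \<nu> Y" if "Y \<in> Ginv_set A" for Y
    using assms(2)[OF that] by (cases "Y = X") auto
  have unique: "Y = X" if "Y \<in> Ginv_set A" "\<nu> Y \<le> \<nu> X" for Y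
  proof (rule ccontr)
    assume "Y \<noteq> X"
    with assms(2) that(1) have "\<nu> X < \<nu> Y" .
    with that(2) show False by simp
  qed
  show ?thesis
    unfolding ginv_def using assms(1) minimal unique by auto
qed

lemma ginv_colnorm_eq_sparse:
  fixes A X :: "complex mat"
  assumes A: "A \<in> carrier_mat m n" and rec: "recovers p A k" and q: "0 < q"
    and X: "X \<in> Ginv_set A" and sparse: "\<forall>j < dim_col X. nnz (col X j) \<le> k"
  shows "ginv (colnorm p q) A = {X}"
proof (rule ginv_eq_singletonI[OF X])
  fix Y assume Y: "Y \<in> Ginv_set A" "Y \<noteq> X"
  have dims: "X \<in> carrier_mat n m" "Y \<in> carrier_mat n m"
    using A X Y unfolding Ginv_set_def by auto
  have less: "pnorm p (col X j) < pnorm p (col Y j)" if j: "j < m" "col Y j \<noteq> col X j" for j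
  proof -
    have Xj: "col X j \<in> carrier_vec (dim_col A)" and Yj: "col Y j \<in> carrier_vec (dim_col A)"
      using A dims j by auto
    have "nnz (col X j) \<le> k"
      using sparse dims j by auto
    moreover have "A *\<^sub>v col Y j = A *\<^sub>v col X j"
      using Ginv_set_col[OF A X j(1)] Ginv_set_col[OF A Y(1) j(1)] by simp
    ultimately show ?thesis
      using recoversD[OF rec Xj _ Yj _ j(2)] by blast
  qed
  then have le: "pnorm p (col X j) \<le> pnorm p (col Y j)" if "j < m" for j
    using that by (cases "col Y j = col X j") (auto intro: less_imp_le)
  have "\<exists>j<m. col Y j \<noteq> col X j"
  proof (rule ccontr)
    assume "\<not> (\<exists>j<m. col Y j \<noteq> col X j)"
    then have "Y = X"
      using dims by (intro mat_col_eqI) auto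
    with Y(2) show False ..
  qed
  then obtain j0 where "j0 < m" "col Y j0 \<noteq> col X j0"
    by blast
  then show "colnorm p q X < colnorm p q Y"
    using colnorm_less[OF dims q le] less by blast
qed

theorem theorem6:
  fixes A X :: "complex mat" and m n :: nat and p0 :: real
  assumes "A \<in> carrier_mat m n" and "m < n"
    and "vec_space.rank m A = m"
    and "0 < p0" and "p0 \<le> 1"
    and "X \<in> Ginv_set A"
    and "\<forall>j < dim_col X. nnz (col X j) \<le> kp p0 A"
  shows "\<forall>q p. 0 < q \<and> 0 \<le> p \<and> p \<le> p0 \<longrightarrow> ginv (colnorm p q) A = {X}"
proof (intro allI impI)
  fix q p :: real
  assume qp: "0 < q \<and> 0 \<le> p \<and> p \<le> p0"
  have "vec_space.rank m A < n"
    using assms(2,3) by simp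
  then have "recovers p0 A (kp p0 A)"
    using recovers_kp[OF assms(1)] assms(4) by simp
  then have "recovers p A (kp p0 A)"
    using recovers_exponent_mono[OF assms(1)] qp assms(5) by simp
  then show "ginv (colnorm p q) A = {X}"
    using ginv_colnorm_eq_sparse[OF assms(1) _ _ assms(6,7)] qp by blast
qed

end
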